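(* Let $P=\{x\in\mathbb R^3:(a^i)^\intercal x\le b_i,\ 1\le i\le n\}$ be a 3-dimensional polytope centrally symmetric with respect to the origin, where $b_i>0$ and each inequality defines a facet $F_i$ with supporting hyperplane $H_i=\{x:(a^i)^\intercal x=b_i\}$. For indices $i_1,\dots,i_6$ let $A_{i_1,\dots,i_6}\in\mathbb R^{6\times 9}$ be the matrix with rows $((a^{i_1})^\intercal,0,0)$, $(0,(a^{i_2})^\intercal,0)$, $(0,0,(a^{i_3})^\intercal)$, $(0,(a^{i_4})^\intercal,-(a^{i_4})^\intercal)$, $(-(a^{i_5})^\intercal,0,(a^{i_5})^\intercal)$, $((a^{i_6})^\intercal,-(a^{i_6})^\intercal,0)$, and let $\mathcal S$ be the set of matrices $W=(w^1,w^2,w^3)\in\mathbb R^{3\times3}$ with $A_{i_1,\dots,i_6}(w^1;w^2;w^3)=(b_{i_1},\dots,b_{i_6})^\intercal$. If $\mathrm{rank}(A_{i_1,\dots,i_6})<6$, then the function $f(W)=|\det W|$ on $\mathcal S$ has no local minimum $W\in\mathcal S$ with $f(W)>0$. *)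

theory Defs
  imports "HOL-Analysis.Analysis"
begin

definition polyP :: "nat \<Rightarrow> (nat \<Rightarrow> real^3) \<Rightarrow> (nat \<Rightarrow> real) \<Rightarrow> (real^3) set" where
  "polyP n a b = {x. \<forall>i\<in>{1..n}. a i \<bullet> x \<le> b i}"

text \<open>The 9 columns are indexed by pairs (k,j) :: 3 x 3,
  k the block (1,2,3) and j the coordinate inside the block; the rows are indexed by type 6
  with row 6 written as the element 0 of type 6.\<close>
definition coefA :: "(nat \<Rightarrow> real^3) \<Rightarrow> nat \<Rightarrow> nat \<Rightarrow> nat \<Rightarrow> nat \<Rightarrow> nat \<Rightarrow> nat \<Rightarrow> real^(3\<times>3)^6" where
  "coefA a i1 i2 i3 i4 i5 i6 = (\<chi> r. \<chi> p. let (k,j) = p in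
     if r = 1 then (if k = 1 then a i1 $ j else 0)
     else if r = 2 then (if k = 2 then a i2 $ j else 0)
     else if r = 3 then (if k = 3 then a i3 $ j else 0)
     else if r = 4 then (if k = 2 then a i4 $ j else if k = 3 then - (a i4 $ j) else 0)
     else if r = 5 then (if k = 1 then - (a i5 $ j) else if k = 3 then a i5 $ j else 0)
     else (if k = 1 then a i6 $ j else if k = 2 then - (a i6 $ j) else 0))"

definition rhsb :: "(nat \<Rightarrow> real) \<Rightarrow> nat \<Rightarrow> nat \<Rightarrow> nat \<Rightarrow> nat \<Rightarrow> nat \<Rightarrow> nat \<Rightarrow> real^6" where
  "rhsb b i1 i2 i3 i4 i5 i6 = (\<chi> r.
     if r = 1 then b i1 else if r = 2 then b i2 else if r = 3 then b i3
     else if r = 4 then b i4 else if r = 5 then b i5 else b i6)"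

definition stackW :: "real^3^3 \<Rightarrow> real^(3\<times>3)" where
  "stackW W = (\<chi> p. W $ snd p $ fst p)"

definition solS :: "(nat \<Rightarrow> real^3) \<Rightarrow> (nat \<Rightarrow> real) \<Rightarrow> nat \<Rightarrow> nat \<Rightarrow> nat \<Rightarrow> nat \<Rightarrow> nat \<Rightarrow> nat \<Rightarrow> (real^3^3) set" where
  "solS a b i1 i2 i3 i4 i5 i6 =
     {W. coefA a i1 i2 i3 i4 i5 i6 *v stackW W = rhsb b i1 i2 i3 i4 i5 i6}"

end

theory Submission
  imports Defs
begin

text \<open>If the rank is below 6, the kernel of \<open>V \<mapsto> A (v\<^sup>1; v\<^sup>2; v\<^sup>3)\<close> meets the
  6-dimensional space \<open>{W M. M symmetric}\<close> nontrivially: some nonzero symmetric \<open>M\<close>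
  keeps \<open>W (I + t M)\<close> in \<open>S\<close> for every \<open>t\<close>. Along this line the objective is
  \<open>|det W| |1 + tr M t + s\<^sub>2 t\<^sup>2 + det M t\<^sup>3|\<close> with \<open>2 s\<^sub>2 = (tr M)\<^sup>2 - tr (M\<^sup>2)\<close>,
  so a local minimum at \<open>t = 0\<close> forces \<open>tr M = 0\<close> and \<open>s\<^sub>2 \<ge> 0\<close>, i.e.
  \<open>tr (M\<^sup>2) \<le> 0\<close>. For symmetric \<open>M\<close>, \<open>tr (M\<^sup>2)\<close> is the squared Frobenius norm,
  hence \<open>M = 0\<close>, a contradiction.\<close>

lemma trace_mult_transpose:
  fixes M :: "real^'n^'m"
  shows "trace (M ** transpose M) = M \<bullet> M"
  by (simp add: trace_def matrix_matrix_mult_def transpose_def inner_vec_def)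

lemma trace_square_pos_if_symmetric:
  fixes M :: "real^'n^'n"
  assumes "transpose M = M" and "M \<noteq> 0"
  shows "trace (M ** M) > 0"
  using trace_mult_transpose[of M] assms by simp

lemma det_mat1_plus_scaleR_3:
  fixes M :: "real^3^3"
  shows "det (mat 1 + t *\<^sub>R M) =
    1 + trace M * t + (trace M ^ 2 - trace (M ** M)) / 2 * t ^ 2 + det M * t ^ 3"
  by (simp add: det_3 mat_def trace_def sum_3 matrix_matrix_mult_def power2_eq_square
      power3_eq_cube field_simps)

lemma cubic_local_min_at_zero:
  fixes c1 c2 c3 :: real
  assumes "\<forall>\<^sub>F t in at 0. 1 \<le> \<bar>1 + c1 * t + c2 * t ^ 2 + c3 * t ^ 3\<bar>"
  shows "c1 = 0 \<and> 0 \<le> c2"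
proof -
  define p where "p t = 1 + c1 * t + c2 * t ^ 2 + c3 * t ^ 3" for t :: real
  have "(p \<longlongrightarrow> p 0) (at 0)"
    unfolding p_def by (intro tendsto_intros)
  then have "\<forall>\<^sub>F t in at 0. 0 < p t"
    by (rule order_tendstoD) (simp add: p_def)
  with assms have ge: "\<forall>\<^sub>F t in at 0. p 0 \<le> p t"
    by eventually_elim (simp add: p_def)
  then obtain d where "d > 0" and "\<And>t. t \<noteq> 0 \<Longrightarrow> \<bar>t\<bar> < d \<Longrightarrow> p 0 \<le> p t"
    unfolding eventually_at dist_real_def by auto
  then have "\<forall>t. \<bar>0 - t\<bar> < d \<longrightarrow> p 0 \<le> p t"
    by (metis abs_minus_commute diff_0_right order_refl)
  moreover have "DERIV p 0 :> c1"
    unfolding p_def by (auto intro!: derivative_eq_intros)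
  ultimately have c1: "c1 = 0"
    using DERIV_local_min \<open>d > 0\<close> by blast
  from ge have "\<forall>\<^sub>F t in at_right 0. p 0 \<le> p t"
    by (simp add: eventually_at_split)
  with eventually_at_right_less have "\<forall>\<^sub>F t in at_right 0. 0 \<le> c2 + c3 * t"
  proof eventually_elim
    case (elim t)
    then have "0 \<le> t\<^sup>2 * (c2 + c3 * t)"
      by (simp add: p_def c1 algebra_simps power2_eq_square power3_eq_cube)
    then show ?case
      using \<open>0 < t\<close> by (simp add: zero_le_mult_iff)
  qed
  moreover have "((\<lambda>t. c2 + c3 * t) \<longlongrightarrow> c2) (at_right 0)"
    by (auto intro!: tendsto_eq_intros)
  ultimately have "0 \<le> c2"
    by (intro tendsto_lowerbound) auto
  with c1 show ?thesis ..
qed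

lemma abs_det_frequently_less_along_symmetric:
  fixes W M :: "real^3^3"
  assumes "det W \<noteq> 0" and "transpose M = M" and "M \<noteq> 0"
  shows "\<exists>\<^sub>F t in at 0. \<bar>det (W + t *\<^sub>R (W ** M))\<bar> < \<bar>det W\<bar>"
proof (rule ccontr)
  assume "\<not> ?thesis"
  then have "\<forall>\<^sub>F t in at 0. \<bar>det W\<bar> \<le> \<bar>det (W + t *\<^sub>R (W ** M))\<bar>"
    by (simp add: not_frequently not_less)
  moreover have "W + t *\<^sub>R (W ** M) = W ** (mat 1 + t *\<^sub>R M)" for t
    by (simp add: matrix_add_ldistrib matrix_scalar_ac scalar_matrix_assoc)
  ultimately have "\<forall>\<^sub>F t in at 0. 1 \<le> \<bar>det (mat 1 + t *\<^sub>R M)\<bar>"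
    using assms(1) by (simp add: det_mul abs_mult)
  then have "trace M = 0 \<and> 0 \<le> (trace M ^ 2 - trace (M ** M)) / 2"
    unfolding det_mat1_plus_scaleR_3 by (rule cubic_local_min_at_zero)
  with trace_square_pos_if_symmetric[OF assms(2,3)] show False
    by auto
qed

text \<open>Symmetric matrices parametrized by (diagonal, off-diagonal) \<open>\<in> \<real>\<^sup>3 \<times> \<real>\<^sup>3\<close>,
  so that their dimension 6 is that of the parameter space.\<close>

definition sym3 :: "(real^3) \<times> (real^3) \<Rightarrow> real^3^3" where
  "sym3 = (\<lambda>(d, u). vector [vector [d$1, u$3, u$2], vector [u$3, d$2, u$1], vector [u$2, u$1, d$3]])"

lemma linear_sym3: "linear sym3"
  by (rule linearI) (auto simp: sym3_def vec_eq_iff forall_3)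

lemma transpose_sym3: "transpose (sym3 x) = sym3 x"
  by (auto simp: sym3_def transpose_def vec_eq_iff forall_3 split: prod.splits)

lemma sym3_eq_0_iff: "sym3 x = 0 \<longleftrightarrow> x = 0"
  by (auto simp: sym3_def vec_eq_iff forall_3 prod_eq_iff split: prod.splits)

lemma symmetric_in_kernel_if_dim_range_less:
  fixes L :: "real^3^3 \<Rightarrow> 'b::euclidean_space"
  assumes "linear L" and "dim (range L) < 6"
  obtains M where "transpose M = M" and "M \<noteq> 0" and "L M = 0"
proof -
  have lin: "linear (L \<circ> sym3)"
    using linear_compose[OF linear_sym3 \<open>linear L\<close>] .
  have "\<not> inj (L \<circ> sym3)"
  proof
    assume "inj (L \<circ> sym3)"
    then have "dim (range (L \<circ> sym3)) = dim (UNIV :: ((real^3) \<times> (real^3)) set)"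
      by (intro dim_image_eq[OF lin]) (auto intro: inj_on_subset)
    also have "\<dots> = 6"
      by simp
    finally have "6 \<le> dim (range L)"
      by (metis dim_subset image_comp image_subset_iff rangeI)
    with assms(2) show False
      by simp
  qed
  then obtain x where "x \<noteq> 0" and "L (sym3 x) = 0"
    using linear_injective_0[OF lin] by auto
  then show thesis
    using that transpose_sym3 sym3_eq_0_iff by blast
qed

lemma linear_matrix_mult_left:
  fixes A :: "real^'m^'n"
  shows "linear (\<lambda>M :: real^'k^'m. A ** M)"
  by (rule linearI) (simp_all add: matrix_add_ldistrib matrix_scalar_ac scalar_matrix_assoc)

lemma linear_stackW: "linear stackW"
  by (rule linearI) (simp_all add: stackW_def vec_eq_iff)

lemma solS_add_kernel:
  assumes "W \<in> solS a b i1 i2 i3 i4 i5 i6"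
    and "coefA a i1 i2 i3 i4 i5 i6 *v stackW D = 0"
  shows "W + t *\<^sub>R D \<in> solS a b i1 i2 i3 i4 i5 i6"
  using assms
  by (simp add: solS_def linear_add[OF linear_stackW] linear_scale[OF linear_stackW]
      matrix_vector_right_distrib matrix_vector_mult_scaleR)

lemma symmetric_direction_in_kernel:
  fixes A :: "real^(3 \<times> 3)^'m" and W :: "real^3^3"
  assumes "rank A < 6"
  obtains M where "transpose M = M" and "M \<noteq> 0" and "A *v stackW (W ** M) = 0"
proof (rule symmetric_in_kernel_if_dim_range_less)
  show "linear (\<lambda>M. A *v stackW (W ** M))"
    using linear_compose[OF linear_compose[OF linear_matrix_mult_left linear_stackW]
        matrix_vector_mul_linear]
    by (simp add: o_def)
  have "range (\<lambda>M. A *v stackW (W ** M)) \<subseteq> range (\<lambda>x. A *v x)"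
    by auto
  then have "dim (range (\<lambda>M. A *v stackW (W ** M))) \<le> rank A"
    unfolding rank_dim_range by (rule dim_subset)
  with assms show "dim (range (\<lambda>M. A *v stackW (W ** M))) < 6"
    by simp
qed (use that in blast)

theorem lemma4p1:
  fixes n :: nat and a :: "nat \<Rightarrow> real^3" and b :: "nat \<Rightarrow> real"
    and i1 i2 i3 i4 i5 i6 :: nat
  assumes "polytope (polyP n a b)"
    and "aff_dim (polyP n a b) = 3"
    and "\<forall>x\<in>polyP n a b. - x \<in> polyP n a b"
    and "\<forall>i\<in>{1..n}. b i > 0"
    and "\<forall>i\<in>{1..n}. (polyP n a b \<inter> {x. a i \<bullet> x = b i}) facet_of (polyP n a b)"
    and "{i1, i2, i3, i4, i5, i6} \<subseteq> {1..n}"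
    and "rank (coefA a i1 i2 i3 i4 i5 i6) < 6"
  shows "\<not> (\<exists>W\<in>solS a b i1 i2 i3 i4 i5 i6. \<bar>det W\<bar> > 0 \<and>
            (\<exists>e>0. \<forall>V\<in>solS a b i1 i2 i3 i4 i5 i6. dist V W < e \<longrightarrow> \<bar>det W\<bar> \<le> \<bar>det V\<bar>))"
proof
  assume "\<exists>W\<in>solS a b i1 i2 i3 i4 i5 i6. \<bar>det W\<bar> > 0 \<and>
            (\<exists>e>0. \<forall>V\<in>solS a b i1 i2 i3 i4 i5 i6. dist V W < e \<longrightarrow> \<bar>det W\<bar> \<le> \<bar>det V\<bar>)"
  then obtain W e where W: "W \<in> solS a b i1 i2 i3 i4 i5 i6" and "det W \<noteq> 0" and "e > 0"
    and min: "\<forall>V\<in>solS a b i1 i2 i3 i4 i5 i6. dist V W < e \<longrightarrow> \<bar>det W\<bar> \<le> \<bar>det V\<bar>"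
    by auto
  obtain M where "transpose M = M" and "M \<noteq> 0"
    and "coefA a i1 i2 i3 i4 i5 i6 *v stackW (W ** M) = 0"
    using symmetric_direction_in_kernel[OF assms(7)] .
  have "((\<lambda>t. W + t *\<^sub>R (W ** M)) \<longlongrightarrow> W) (at 0)"
    by (auto intro!: tendsto_eq_intros)
  then have "\<forall>\<^sub>F t in at 0. dist (W + t *\<^sub>R (W ** M)) W < e"
    using \<open>e > 0\<close> by (rule tendstoD)
  then obtain t where "\<bar>det (W + t *\<^sub>R (W ** M))\<bar> < \<bar>det W\<bar>"
    and "dist (W + t *\<^sub>R (W ** M)) W < e"
    using frequently_eventually_frequently[OF abs_det_frequently_less_along_symmetric]
      \<open>det W \<noteq> 0\<close> \<open>transpose M = M\<close> \<open>M \<noteq> 0\<close> frequently_ex by blast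
  moreover have "W + t *\<^sub>R (W ** M) \<in> solS a b i1 i2 i3 i4 i5 i6"
    using W by (rule solS_add_kernel) fact
  ultimately show False
    using min by fastforce
qed

end
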